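(* Under the setting of the context, assume (TS1). Let $u$ be the solution of problem (P). Then (i) $\lim_{t\to\infty,\,t\in\mathbb{T}}u(0,t)=0$ and (ii) $\int_0^\infty u(0,t)\,\Delta t=\frac{A\mu_x}{k}$.
   Context: A time scale $\mathbb{T}$ is a nonempty closed subset of $\mathbb{R}$; here $\min\mathbb{T}=0$ and $\sup\mathbb{T}=+\infty$. $\sigma(t)=\inf\{s\in\mathbb{T}:s>t\}$ is the forward jump and $\mu_t(t)=\sigma(t)-t$ the graininess; $u^{\Delta_t}$ denotes the (Hilger) delta derivative in $t$ (the ordinary derivative at right-dense points, $(u(x,\sigma(t))-u(x,t))/\mu_t(t)$ at right-scattered points), and $\int\cdot\,\Delta t$ the delta integral, with $\int_0^\infty=\lim_{T\to\infty}\int_0^T$. For $p$ with $1+p\mu_t(t)\ne0$, $e_p(t,s)$ is the time-scale exponential, i.e. the solution of $y^{\Delta}=py$, $y(s)=1$. Fix $A>0$, $k>0$, $\mu_x>0$, $\Omega=\mu_x\mathbb{Z}\times\mathbb{T}$. Problem (P): $u^{\Delta_t}(x,t)+k\frac{u(x,t)-u(x-\mu_x,t)}{\mu_x}=0$ for $(x,t)\in\Omega$, $u(0,0)=A$, $u(x,0)=0$ for $x\ne0$. A solution is $u:\Omega\to\mathbb{R}$ with each $u(x,\cdot)$ delta differentiable on $\mathbb{T}$, satisfying (P), and bounded on $\mu_x\mathbb{Z}\times(\mathbb{T}\cap[0,T_0])$ for every $T_0>0$. Condition (TS1): $1-\frac{k\mu_t(t)}{\mu_x}>0$ for all $t\in\mathbb{T}$.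 *)

theory Defs
  imports Complex_Main
begin

definition ts_sigma :: "real set \<Rightarrow> real \<Rightarrow> real" where
  "ts_sigma T t = (if \<exists>s\<in>T. s > t then Inf {s\<in>T. s > t} else t)"

definition ts_mu :: "real set \<Rightarrow> real \<Rightarrow> real" where
  "ts_mu T t = ts_sigma T t - t"

definition has_delta_derivative :: "real set \<Rightarrow> (real \<Rightarrow> real) \<Rightarrow> real \<Rightarrow> real \<Rightarrow> bool" where
  "has_delta_derivative T f D t \<longleftrightarrow>
     (\<forall>e>0. \<exists>d>0. \<forall>s\<in>T. \<bar>s - t\<bar> < d \<longrightarrow>
        \<bar>f (ts_sigma T t) - f s - D * (ts_sigma T t - s)\<bar> \<le> e * \<bar>ts_sigma T t - s\<bar>)"

definition delta_integral :: "real set \<Rightarrow> (real \<Rightarrow> real) \<Rightarrow> real \<Rightarrow> real \<Rightarrow> real" where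
  "delta_integral T f a b =
     (THE I. \<exists>F. (\<forall>t\<in>T. has_delta_derivative T F (f t) t) \<and> I = F b - F a)"

end

theory Submission
  imports Defs "HOL-Analysis.Analysis" "HOL-Real_Asymp.Real_Asymp"
begin

(* Put c = k / mux and U n t = u (n * mux) t.  Then (P) is the chain of scalar linear
   dynamic equations  U n ^Delta = - c (U n - U (n - 1)),  each driven by its upstream
   neighbour, and (TS1) says 1 - c mu(t) > 0.

   1. Every U n with n < 0 vanishes identically: from a uniform bound B on [0, t + 1],
      induction on j gives |U n s| <= B (c s)^j / j! for all n < 0 (a Picard iteration);
      the right-hand side tends to 0 as j grows.
   2. Hence w = U 0 solves w^Delta = - c w, w 0 = A.  Comparison with A / (1 + c t)
      gives w t -> 0, and - w / c is a delta antiderivative of w, so the delta integral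
      of w over [0, s] equals (A - w s) / c, which tends to A / c = A mux / k.

   Both estimates rest on one comparison principle (abs_comparison): a bound |w| <= H
   spreads over the time scale if it survives every right-scattered jump and H strictly
   outruns w wherever they touch at a right-dense point.  It is derived from an
   induction principle for time scales (ts_induct). *)

lemma ts_sigma_ge: "t \<le> ts_sigma T t"
proof (cases "\<exists>s\<in>T. s > t")
  case True
  then have "{s\<in>T. s > t} \<noteq> {}" by auto
  then have "t \<le> Inf {s\<in>T. s > t}" by (rule cInf_greatest) auto
  then show ?thesis using True by (simp add: ts_sigma_def)
qed (simp add: ts_sigma_def)

lemma ts_sigma_le: "s \<in> T \<Longrightarrow> t < s \<Longrightarrow> ts_sigma T t \<le> s"
proof -
  assume s: "s \<in> T" "t < s"
  have "bdd_below {s\<in>T. s > t}" by (rule bdd_belowI[of _ t]) auto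
  then have "Inf {s\<in>T. s > t} \<le> s" by (rule cInf_lower[rotated]) (use s in auto)
  then show ?thesis using s by (auto simp add: ts_sigma_def)
qed

lemma ts_sigma_eq_next:
  assumes t: "t \<in> T" and rt: "r < t" and gap: "\<forall>s\<in>T. \<not> (r < s \<and> s < t)"
  shows "ts_sigma T r = t"
proof -
  have "Inf {s\<in>T. s > r} = t"
  proof (rule cInf_eq_minimum)
    show "t \<in> {s\<in>T. s > r}" using t rt by simp
  next
    fix s assume "s \<in> {s\<in>T. s > r}"
    then show "t \<le> s" using gap by force
  qed
  then show ?thesis using t rt by (auto simp add: ts_sigma_def)
qed

(* A left-scattered point t of a closed time scale that is not its minimum is the
   forward jump of some earlier point (the supremum of the points below t). *)
lemma ts_left_scattered_predecessor:
  assumes cl: "closed T" and t: "t \<in> T" and r0: "r0 \<in> T" "r0 < t"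
    and gap: "\<delta> > 0" "\<forall>s\<in>T. \<not> (t - \<delta> < s \<and> s < t)"
  obtains r where "r \<in> T" "r < t" "ts_sigma T r = t"
proof -
  define L where "L = {s\<in>T. s < t}"
  have ne: "L \<noteq> {}" using r0 by (auto simp: L_def)
  have bdd: "bdd_above L" by (rule bdd_aboveI[of L t]) (simp add: L_def)
  have rT: "Sup L \<in> T" by (rule closed_subset_contains_Sup[OF cl _ ne bdd]) (auto simp: L_def)
  have "Sup L \<le> t - \<delta>" by (rule cSup_least[OF ne]) (use gap in \<open>force simp: L_def\<close>)
  moreover have "\<forall>s\<in>T. \<not> (Sup L < s \<and> s < t)"
    using cSup_upper[OF _ bdd] by (force simp: L_def)
  ultimately show ?thesis using that[OF rT] ts_sigma_eq_next[OF t] gap(1) by force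
qed

(* The defining estimate at s = t: across a jump the delta derivative is the difference
   quotient, f (sigma t) = f t + mu t * D. *)
lemma delta_derivative_at_sigma:
  assumes t: "t \<in> T" and d: "has_delta_derivative T f D t"
  shows "f (ts_sigma T t) = f t + (ts_sigma T t - t) * D"
proof (rule ccontr)
  define X where "X = f (ts_sigma T t) - f t - D * (ts_sigma T t - t)"
  define m where "m = \<bar>ts_sigma T t - t\<bar>"
  assume "\<not> ?thesis"
  then have X0: "X \<noteq> 0" unfolding X_def by (auto simp: algebra_simps)
  have e: "\<bar>X\<bar> / (m + 1) > 0" using X0 by (simp add: m_def add_nonneg_pos)
  have "\<bar>X\<bar> \<le> \<bar>X\<bar> / (m + 1) * m"
    using d e t unfolding has_delta_derivative_def X_def m_def by force
  also have "\<dots> < \<bar>X\<bar>" using X0 by (simp add: m_def field_simps)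
  finally show False by simp
qed

(* Comparing the defining estimate at s and at t bounds the increment of f near t. *)
lemma delta_derivative_increment:
  assumes d: "has_delta_derivative T f D t" and t: "t \<in> T" and e: "e > 0"
  obtains \<delta> where "\<delta> > 0" "\<forall>s\<in>T. \<bar>s - t\<bar> < \<delta> \<longrightarrow>
      \<bar>f s - f t - D * (s - t)\<bar> \<le> e * (\<bar>s - t\<bar> + 2 * \<bar>ts_sigma T t - t\<bar>)"
proof -
  let ?E = "\<lambda>x. f (ts_sigma T t) - f x - D * (ts_sigma T t - x)"
  obtain \<delta> where \<delta>: "\<delta> > 0" "\<forall>s\<in>T. \<bar>s - t\<bar> < \<delta> \<longrightarrow> \<bar>?E s\<bar> \<le> e * \<bar>ts_sigma T t - s\<bar>"
    using d e unfolding has_delta_derivative_def by blast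
  have "\<bar>f s - f t - D * (s - t)\<bar> \<le> e * (\<bar>s - t\<bar> + 2 * \<bar>ts_sigma T t - t\<bar>)"
    if s: "s \<in> T" "\<bar>s - t\<bar> < \<delta>" for s
  proof -
    have "f s - f t - D * (s - t) = ?E t - ?E s" by (simp add: algebra_simps)
    then have "\<bar>f s - f t - D * (s - t)\<bar> \<le> \<bar>?E t\<bar> + \<bar>?E s\<bar>" by linarith
    also have "\<dots> \<le> e * \<bar>ts_sigma T t - t\<bar> + e * \<bar>ts_sigma T t - s\<bar>"
      using \<delta> s t by (intro add_mono) auto
    also have "\<dots> \<le> e * \<bar>ts_sigma T t - t\<bar> + e * (\<bar>s - t\<bar> + \<bar>ts_sigma T t - t\<bar>)"
      using e by (intro add_left_mono mult_left_mono) auto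
    finally show ?thesis by (simp add: algebra_simps)
  qed
  then show ?thesis using that \<delta>(1) by blast
qed

lemma delta_derivative_continuous:
  assumes t: "t \<in> T" and d: "has_delta_derivative T f D t"
  shows "continuous (at t within T) f"
  unfolding continuous_within_eps_delta
proof (intro allI impI)
  fix \<epsilon> :: real assume \<epsilon>: "\<epsilon> > 0"
  define m where "m = \<bar>ts_sigma T t - t\<bar>"
  define p where "p = 1 + 2 * m"
  define e where "e = \<epsilon> / (2 * p)"
  have p: "p > 0" by (simp add: p_def m_def add_pos_nonneg)
  have e: "e > 0" using \<epsilon> p by (simp add: e_def)
  have e_eq: "e * (1 + 2 * m) = \<epsilon> / 2" using p by (simp add: e_def flip: p_def)
  obtain d where d: "d > 0"
    "\<forall>s\<in>T. \<bar>s - t\<bar> < d \<longrightarrow> \<bar>f s - f t - D * (s - t)\<bar> \<le> e * (\<bar>s - t\<bar> + 2 * m)"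
    using delta_derivative_increment[OF d t e] unfolding m_def by blast
  define r where "r = min d (min 1 (\<epsilon> / (2 * (\<bar>D\<bar> + 1))))"
  have "r > 0" using d \<epsilon> by (simp add: r_def add_pos_nonneg)
  moreover have "dist (f s) (f t) < \<epsilon>" if s: "s \<in> T" "dist s t < r" for s
  proof -
    have st: "\<bar>s - t\<bar> < d" "\<bar>s - t\<bar> < 1" "\<bar>s - t\<bar> < \<epsilon> / (2 * (\<bar>D\<bar> + 1))"
      using s by (auto simp: dist_real_def r_def)
    have "\<bar>D\<bar> * \<bar>s - t\<bar> \<le> \<bar>D\<bar> * (\<epsilon> / (2 * (\<bar>D\<bar> + 1)))"
      using st(3) by (intro mult_left_mono) auto
    also have "\<dots> < \<epsilon> / 2" using \<epsilon> by (simp add: field_simps)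
    finally have lin: "\<bar>D * (s - t)\<bar> < \<epsilon> / 2" by (simp add: abs_mult)
    have "e * (\<bar>s - t\<bar> + 2 * m) < e * (1 + 2 * m)" using st(2) e by simp
    then have rest: "\<bar>f s - f t - D * (s - t)\<bar> < \<epsilon> / 2" using d(2) s(1) st(1) e_eq by fastforce
    have "\<bar>f s - f t\<bar> \<le> \<bar>D * (s - t)\<bar> + \<bar>f s - f t - D * (s - t)\<bar>" by linarith
    then show ?thesis using lin rest by (simp add: dist_real_def)
  qed
  ultimately show "\<exists>\<delta>>0. \<forall>s\<in>T. dist s t < \<delta> \<longrightarrow> dist (f s) (f t) < \<epsilon>" by blast
qed

lemma delta_derivative_lin:
  assumes df: "has_delta_derivative T f Df t" and dg: "has_delta_derivative T g Dg t"
  shows "has_delta_derivative T (\<lambda>s. a * f s + b * g s) (a * Df + b * Dg) t"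
  unfolding has_delta_derivative_def
proof (intro allI impI)
  fix e :: real assume e: "e > 0"
  define e' where "e' = e / (\<bar>a\<bar> + \<bar>b\<bar> + 1)"
  have e': "e' > 0" "(\<bar>a\<bar> + \<bar>b\<bar>) * e' \<le> e"
    using e by (simp_all add: e'_def field_simps add_pos_nonneg)
  let ?F = "\<lambda>s. f (ts_sigma T t) - f s - Df * (ts_sigma T t - s)"
  let ?G = "\<lambda>s. g (ts_sigma T t) - g s - Dg * (ts_sigma T t - s)"
  obtain d1 where d1: "d1 > 0" "\<forall>s\<in>T. \<bar>s - t\<bar> < d1 \<longrightarrow> \<bar>?F s\<bar> \<le> e' * \<bar>ts_sigma T t - s\<bar>"
    using df e' unfolding has_delta_derivative_def by blast
  obtain d2 where d2: "d2 > 0" "\<forall>s\<in>T. \<bar>s - t\<bar> < d2 \<longrightarrow> \<bar>?G s\<bar> \<le> e' * \<bar>ts_sigma T t - s\<bar>"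
    using dg e' unfolding has_delta_derivative_def by blast
  have "\<bar>a * f (ts_sigma T t) + b * g (ts_sigma T t) - (a * f s + b * g s)
          - (a * Df + b * Dg) * (ts_sigma T t - s)\<bar> \<le> e * \<bar>ts_sigma T t - s\<bar>"
    if s: "s \<in> T" "\<bar>s - t\<bar> < min d1 d2" for s
  proof -
    let ?m = "\<bar>ts_sigma T t - s\<bar>"
    have "a * f (ts_sigma T t) + b * g (ts_sigma T t) - (a * f s + b * g s)
          - (a * Df + b * Dg) * (ts_sigma T t - s) = a * ?F s + b * ?G s"
      by (simp add: algebra_simps)
    moreover have "\<bar>a * ?F s + b * ?G s\<bar> \<le> \<bar>a\<bar> * \<bar>?F s\<bar> + \<bar>b\<bar> * \<bar>?G s\<bar>"
      by (simp add: abs_mult abs_triangle_ineq[THEN order_trans])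
    moreover have "\<bar>a\<bar> * \<bar>?F s\<bar> + \<bar>b\<bar> * \<bar>?G s\<bar> \<le> \<bar>a\<bar> * (e' * ?m) + \<bar>b\<bar> * (e' * ?m)"
      using d1 d2 s by (intro add_mono mult_left_mono) auto
    moreover have "\<bar>a\<bar> * (e' * ?m) + \<bar>b\<bar> * (e' * ?m) \<le> e * ?m"
      using e' by (simp add: mult_right_mono flip: distrib_right mult.assoc)
    ultimately show ?thesis by linarith
  qed
  then show "\<exists>d>0. \<forall>s\<in>T. \<bar>s - t\<bar> < d \<longrightarrow>
        \<bar>a * f (ts_sigma T t) + b * g (ts_sigma T t) - (a * f s + b * g s)
          - (a * Df + b * Dg) * (ts_sigma T t - s)\<bar> \<le> e * \<bar>ts_sigma T t - s\<bar>"
    using d1(1) d2(1) by (intro exI[of _ "min d1 d2"]) auto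
qed

lemma delta_derivative_right_dense:
  assumes rd: "ts_sigma T t = t" and H: "(H has_real_derivative E) (at t)"
  shows "has_delta_derivative T H E t"
  unfolding has_delta_derivative_def rd
proof (intro allI impI)
  fix e :: real assume e: "e > 0"
  have "((\<lambda>y. (H y - H t) / (y - t)) \<longlongrightarrow> E) (at t)" using H has_field_derivative_iff by blast
  then obtain d where d: "d > 0"
    "\<forall>y. y \<noteq> t \<and> norm (y - t) < d \<longrightarrow> norm ((H y - H t) / (y - t) - E) < e"
    using e unfolding LIM_eq by blast
  have "\<bar>H t - H s - E * (t - s)\<bar> \<le> e * \<bar>t - s\<bar>" if s: "\<bar>s - t\<bar> < d" for s
  proof (cases "s = t")
    case False
    then have "\<bar>(H s - H t) / (s - t) - E\<bar> < e" using d s by auto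
    then have "\<bar>((H s - H t) - E * (s - t)) / (s - t)\<bar> < e" using False by (simp add: field_simps)
    then have "\<bar>(H s - H t) - E * (s - t)\<bar> < e * \<bar>s - t\<bar>" using False by (simp add: abs_divide field_simps)
    then show ?thesis by (simp add: abs_minus_commute algebra_simps)
  qed simp
  then show "\<exists>d>0. \<forall>s\<in>T. \<bar>s - t\<bar> < d \<longrightarrow> \<bar>H t - H s - E * (t - s)\<bar> \<le> e * \<bar>t - s\<bar>"
    using d(1) by blast
qed

(* The proof
   examines the infimum of the counterexamples. *)
lemma ts_induct:
  fixes T :: "real set" and P :: "real \<Rightarrow> bool"
  assumes cl: "closed T" and aT: "a \<in> T" and amin: "\<forall>t\<in>T. a \<le> t" and Pa: "P a"
    and RS: "\<And>t. t \<in> T \<Longrightarrow> ts_sigma T t > t \<Longrightarrow> P t \<Longrightarrow> P (ts_sigma T t)"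
    and RD: "\<And>t. t \<in> T \<Longrightarrow> ts_sigma T t = t \<Longrightarrow> P t \<Longrightarrow>
               \<exists>\<delta>>0. \<forall>s\<in>T. t < s \<and> s < t + \<delta> \<longrightarrow> P s"
    and LD: "\<And>t. t \<in> T \<Longrightarrow> a < t \<Longrightarrow> (\<forall>s\<in>T. s < t \<longrightarrow> P s) \<Longrightarrow>
               (\<forall>\<delta>>0. \<exists>s\<in>T. t - \<delta> < s \<and> s < t) \<Longrightarrow> P t"
  shows "\<forall>t\<in>T. P t"
proof (rule ccontr)
  define Bad where "Bad = {t\<in>T. \<not> P t}"
  assume "\<not> (\<forall>t\<in>T. P t)"
  then have ne: "Bad \<noteq> {}" by (auto simp: Bad_def)
  have bdd: "bdd_below Bad" using amin by (intro bdd_belowI[of _ a]) (auto simp: Bad_def)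
  define t0 where "t0 = Inf Bad"
  have t0T: "t0 \<in> T" unfolding t0_def
    by (rule closed_subset_contains_Inf[OF cl _ ne bdd]) (auto simp: Bad_def)
  have t0_le: "t0 \<le> s" if "s \<in> Bad" for s using cInf_lower[OF that bdd] by (simp add: t0_def)
  have below: "P s" if "s \<in> T" "s < t0" for s using t0_le that by (force simp: Bad_def)
  have Pt0: "P t0"
  proof (rule ccontr)
    assume bad: "\<not> P t0"
    then have "a < t0" using Pa amin t0T by (metis order_le_less)
    show False
    proof (cases "\<forall>\<delta>>0. \<exists>s\<in>T. t0 - \<delta> < s \<and> s < t0")
      case True
      then show False using LD[OF t0T \<open>a < t0\<close>] below bad by blast
    next
      case False
      then obtain \<delta> where "\<delta> > 0" "\<forall>s\<in>T. \<not> (t0 - \<delta> < s \<and> s < t0)" by blast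
      then obtain r where "r \<in> T" "r < t0" "ts_sigma T r = t0"
        using ts_left_scattered_predecessor[OF cl t0T aT \<open>a < t0\<close>] by blast
      then show False using RS[of r] below bad by auto
    qed
  qed
  have "\<exists>\<delta>>0. \<forall>s\<in>T. t0 < s \<and> s < t0 + \<delta> \<longrightarrow> P s"
  proof (cases "ts_sigma T t0 = t0")
    case True
    then show ?thesis using RD[OF t0T _ Pt0] by blast
  next
    case False
    then have "ts_sigma T t0 > t0" using ts_sigma_ge[of t0 T] by simp
    moreover have "\<not> (t0 < s \<and> s < ts_sigma T t0)" if "s \<in> T" for s
      using ts_sigma_le[OF that] by force
    ultimately show ?thesis by (intro exI[of _ "ts_sigma T t0 - t0"]) auto
  qed
  then obtain \<delta> where \<delta>: "\<delta> > 0" "\<forall>s\<in>T. t0 < s \<and> s < t0 + \<delta> \<longrightarrow> P s" by blast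
  have "t0 + \<delta> \<le> s" if "s \<in> Bad" for s
  proof -
    have s: "s \<in> T" "\<not> P s" using that by (simp_all add: Bad_def)
    then have "t0 < s" using t0_le[OF that] Pt0 by (metis order_le_less)
    then show ?thesis using \<delta>(2) s by (meson not_le)
  qed
  then have "t0 + \<delta> \<le> Inf Bad" by (rule cInf_greatest[OF ne])
  then show False using \<delta>(1) by (simp add: t0_def)
qed

lemma nonpos_right_dense:
  fixes g :: "real \<Rightarrow> real"
  assumes rd: "ts_sigma T t = t" and c: "continuous (at t within T) g"
    and d: "has_delta_derivative T g D t" and g0: "g t \<le> 0" and neg: "g t = 0 \<Longrightarrow> D < 0"
  shows "\<exists>\<delta>>0. \<forall>s\<in>T. t < s \<and> s < t + \<delta> \<longrightarrow> g s \<le> 0"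
proof (cases "g t < 0")
  case True
  then obtain \<delta> where "\<delta> > 0" "\<forall>s\<in>T. dist s t < \<delta> \<longrightarrow> dist (g s) (g t) < - g t"
    using c unfolding continuous_within_eps_delta by (meson neg_0_less_iff_less)
  then show ?thesis by (intro exI[of _ \<delta>]) (auto simp: dist_real_def)
next
  case False
  then have gt: "g t = 0" and D: "D < 0" using g0 neg by auto
  obtain \<delta> where \<delta>: "\<delta> > 0" "\<forall>s\<in>T. \<bar>s - t\<bar> < \<delta> \<longrightarrow>
        \<bar>g t - g s - D * (t - s)\<bar> \<le> (- D / 2) * \<bar>t - s\<bar>"
    using d D unfolding has_delta_derivative_def rd by (metis half_gt_zero_iff neg_0_less_iff_less)
  have "g s \<le> 0" if s: "s \<in> T" "t < s" "s < t + \<delta>" for s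
  proof -
    have "\<bar>g t - g s - D * (t - s)\<bar> \<le> (- D / 2) * \<bar>t - s\<bar>" using \<delta> s by auto
    then have "\<bar>- g s + D * (s - t)\<bar> \<le> (- D / 2) * (s - t)" using gt s by (simp add: algebra_simps)
    then have "g s \<le> D * (s - t) + (- D / 2) * (s - t)" by linarith
    also have "\<dots> = (D / 2) * (s - t)" by (simp add: field_simps)
    also have "\<dots> \<le> 0" using D s by (simp add: mult_nonpos_nonneg)
    finally show ?thesis .
  qed
  then show ?thesis using \<delta>(1) by blast
qed

lemma nonpos_left_dense:
  fixes g :: "real \<Rightarrow> real"
  assumes c: "continuous (at t within T) g" and ld: "\<forall>\<delta>>0. \<exists>s\<in>T. t - \<delta> < s \<and> s < t"
    and below: "\<forall>s\<in>T. s < t \<longrightarrow> g s \<le> 0"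
  shows "g t \<le> 0"
proof (rule ccontr)
  assume "\<not> g t \<le> 0"
  then obtain \<delta> where \<delta>: "\<delta> > 0" "\<forall>s\<in>T. dist s t < \<delta> \<longrightarrow> dist (g s) (g t) < g t"
    using c unfolding continuous_within_eps_delta by (meson not_le)
  obtain s where s: "s \<in> T" "t - \<delta> < s" "s < t" using ld \<delta>(1) by blast
  have "dist (g s) (g t) < g t" using \<delta> s by (auto simp: dist_real_def)
  moreover have "g s \<le> 0" using below s by auto
  ultimately show False by (auto simp: dist_real_def)
qed

lemma abs_bound_right_dense:
  fixes w H :: "real \<Rightarrow> real"
  assumes rd: "ts_sigma T t = t"
    and cw: "continuous (at t within T) w" and cH: "continuous (at t within T) H"
    and dw: "has_delta_derivative T w Dw t" and dH: "has_delta_derivative T H DH t"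
    and bound: "\<bar>w t\<bar> \<le> H t"
    and upper: "w t = H t \<Longrightarrow> Dw < DH" and lower: "w t = - H t \<Longrightarrow> - Dw < DH"
  shows "\<exists>\<delta>>0. \<forall>s\<in>T. t < s \<and> s < t + \<delta> \<longrightarrow> \<bar>w s\<bar> \<le> H s"
proof -
  have cont: "continuous (at t within T) (\<lambda>x. a * w x + b * H x)" for a b
    by (intro continuous_add continuous_mult continuous_const cw cH)
  obtain e1 where e1: "e1 > 0" "\<forall>s\<in>T. t < s \<and> s < t + e1 \<longrightarrow> 1 * w s + (-1) * H s \<le> 0"
    using nonpos_right_dense[OF rd cont delta_derivative_lin[OF dw dH, of 1 "-1"]] bound upper
    by force
  obtain e2 where e2: "e2 > 0" "\<forall>s\<in>T. t < s \<and> s < t + e2 \<longrightarrow> (-1) * w s + (-1) * H s \<le> 0"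
    using nonpos_right_dense[OF rd cont delta_derivative_lin[OF dw dH, of "-1" "-1"]] bound lower
    by force
  show ?thesis using e1 e2 by (intro exI[of _ "min e1 e2"]) (auto simp: abs_le_iff)
qed

lemma abs_bound_left_dense:
  fixes w H :: "real \<Rightarrow> real"
  assumes cw: "continuous (at t within T) w" and cH: "continuous (at t within T) H"
    and ld: "\<forall>\<delta>>0. \<exists>s\<in>T. t - \<delta> < s \<and> s < t"
    and below: "\<forall>s\<in>T. s < t \<longrightarrow> \<bar>w s\<bar> \<le> H s"
  shows "\<bar>w t\<bar> \<le> H t"
proof -
  have cont: "continuous (at t within T) (\<lambda>x. a * w x + b * H x)" for a b
    by (intro continuous_add continuous_mult continuous_const cw cH)
  have "1 * w t + (-1) * H t \<le> 0" "(-1) * w t + (-1) * H t \<le> 0"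
    using below by (intro nonpos_left_dense[OF cont ld]; force)+
  then show ?thesis by simp
qed

lemma abs_comparison:
  fixes w H Dw DH :: "real \<Rightarrow> real"
  assumes cl: "closed T" and aT: "a \<in> T" and amin: "\<forall>t\<in>T. a \<le> t"
    and dw: "\<And>t. t \<in> T \<Longrightarrow> has_delta_derivative T w (Dw t) t"
    and dH: "\<And>t. t \<in> T \<Longrightarrow> (H has_real_derivative DH t) (at t)"
    and start: "\<bar>w a\<bar> \<le> H a"
    and scattered: "\<And>t. t \<in> T \<Longrightarrow> t < ts_sigma T t \<Longrightarrow> ts_sigma T t \<le> Tm \<Longrightarrow>
          \<bar>w t\<bar> \<le> H t \<Longrightarrow> \<bar>w (ts_sigma T t)\<bar> \<le> H (ts_sigma T t)"
    and touch_upper: "\<And>t. t \<in> T \<Longrightarrow> ts_sigma T t = t \<Longrightarrow> t < Tm \<Longrightarrow> w t = H t \<Longrightarrow>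
          Dw t < DH t"
    and touch_lower: "\<And>t. t \<in> T \<Longrightarrow> ts_sigma T t = t \<Longrightarrow> t < Tm \<Longrightarrow> w t = - H t \<Longrightarrow>
          - Dw t < DH t"
  shows "\<forall>t\<in>T. t \<le> Tm \<longrightarrow> \<bar>w t\<bar> \<le> H t"
proof (rule ts_induct[OF cl aT amin, where P = "\<lambda>t. t \<le> Tm \<longrightarrow> \<bar>w t\<bar> \<le> H t"])
  have cw: "continuous (at t within T) w" if "t \<in> T" for t
    by (rule delta_derivative_continuous[OF that dw[OF that]])
  have cH: "continuous (at t within T) H" if "t \<in> T" for t
    using DERIV_isCont[OF dH[OF that]] by (rule continuous_at_imp_continuous_at_within)
  show "a \<le> Tm \<longrightarrow> \<bar>w a\<bar> \<le> H a" using start by simp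
  show "ts_sigma T t \<le> Tm \<longrightarrow> \<bar>w (ts_sigma T t)\<bar> \<le> H (ts_sigma T t)"
    if "t \<in> T" "ts_sigma T t > t" "t \<le> Tm \<longrightarrow> \<bar>w t\<bar> \<le> H t" for t
    using that scattered by force
  show "\<exists>\<delta>>0. \<forall>s\<in>T. t < s \<and> s < t + \<delta> \<longrightarrow> (s \<le> Tm \<longrightarrow> \<bar>w s\<bar> \<le> H s)"
    if t: "t \<in> T" "ts_sigma T t = t" "t \<le> Tm \<longrightarrow> \<bar>w t\<bar> \<le> H t" for t
  proof (cases "t < Tm")
    case True
    then show ?thesis
      using abs_bound_right_dense[OF t(2) cw[OF t(1)] cH[OF t(1)] dw[OF t(1)]
          delta_derivative_right_dense[OF t(2) dH[OF t(1)]]]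
        t(3) touch_upper[OF t(1,2) True] touch_lower[OF t(1,2) True] by fastforce
  next
    case False
    then show ?thesis by (intro exI[of _ 1]) auto
  qed
  show "t \<le> Tm \<longrightarrow> \<bar>w t\<bar> \<le> H t"
    if t: "t \<in> T" "a < t" "\<forall>s\<in>T. s < t \<longrightarrow> (s \<le> Tm \<longrightarrow> \<bar>w s\<bar> \<le> H s)"
      "\<forall>\<delta>>0. \<exists>s\<in>T. t - \<delta> < s \<and> s < t" for t
    using abs_bound_left_dense[OF cw[OF t(1)] cH[OF t(1)] t(4)] t(3) by force
qed

lemma le_by_scaled_epsilon:
  fixes x y K :: real
  assumes K: "K > 0" and le: "\<And>\<epsilon>. \<epsilon> > 0 \<Longrightarrow> x \<le> y + \<epsilon> * K"
  shows "x \<le> y"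
proof (rule field_le_epsilon)
  fix e :: real assume "e > 0"
  then show "x \<le> y + e" using le[of "e / K"] K by simp
qed

(* A function with vanishing delta derivative on T is constant (compare |G - G 0|
   with eps * (1 + t)). *)
lemma delta_derivative_zero_const:
  assumes cl: "closed T" and T0: "0 \<in> T" and nn: "\<forall>t\<in>T. 0 \<le> t"
    and d: "\<And>t. t \<in> T \<Longrightarrow> has_delta_derivative T G 0 t" and s: "s \<in> T"
  shows "G s = G 0"
proof -
  have approx: "\<bar>G s - G 0\<bar> \<le> 0 + \<epsilon> * (1 + s)" if \<epsilon>: "\<epsilon> > 0" for \<epsilon>
  proof -
    have "\<forall>t\<in>T. t \<le> s \<longrightarrow> \<bar>G t - G 0\<bar> \<le> \<epsilon> * (1 + t)"
    proof (rule abs_comparison[OF cl T0 nn, where w = "\<lambda>t. G t - G 0" and H = "\<lambda>t. \<epsilon> * (1 + t)"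
          and Dw = "\<lambda>_. 0" and DH = "\<lambda>_. \<epsilon>"])
      show "has_delta_derivative T (\<lambda>t. G t - G 0) 0 t" if "t \<in> T" for t
        using d[OF that] unfolding has_delta_derivative_def by simp
      show "((\<lambda>t. \<epsilon> * (1 + t)) has_real_derivative \<epsilon>) (at t)" for t
        by (auto intro!: derivative_eq_intros)
      show "\<bar>G 0 - G 0\<bar> \<le> \<epsilon> * (1 + 0)" using \<epsilon> by simp
    next
      fix t assume t: "t \<in> T" "t < ts_sigma T t" "ts_sigma T t \<le> s" "\<bar>G t - G 0\<bar> \<le> \<epsilon> * (1 + t)"
      have "G (ts_sigma T t) = G t" using delta_derivative_at_sigma[OF t(1) d[OF t(1)]] by simp
      moreover have "\<epsilon> * (1 + t) \<le> \<epsilon> * (1 + ts_sigma T t)" using t(2) \<epsilon> by simp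
      ultimately show "\<bar>G (ts_sigma T t) - G 0\<bar> \<le> \<epsilon> * (1 + ts_sigma T t)" using t(4) by simp
    qed (use \<epsilon> in auto)
    then show ?thesis using s by simp
  qed
  have "1 + s > 0" using nn s by force
  then have "\<bar>G s - G 0\<bar> \<le> 0" using approx by (rule le_by_scaled_epsilon)
  then show ?thesis by simp
qed

lemma delta_integral_antiderivative:
  assumes cl: "closed T" and T0: "0 \<in> T" and nn: "\<forall>t\<in>T. 0 \<le> t"
    and F: "\<And>t. t \<in> T \<Longrightarrow> has_delta_derivative T F (f t) t" and s: "s \<in> T"
  shows "delta_integral T f 0 s = F s - F 0"
  unfolding delta_integral_def
proof (rule the_equality)
  show "\<exists>G. (\<forall>t\<in>T. has_delta_derivative T G (f t) t) \<and> F s - F 0 = G s - G 0"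
    using F by blast
next
  fix I assume "\<exists>G. (\<forall>t\<in>T. has_delta_derivative T G (f t) t) \<and> I = G s - G 0"
  then obtain G where G: "\<And>t. t \<in> T \<Longrightarrow> has_delta_derivative T G (f t) t" and I: "I = G s - G 0"
    by blast
  have "has_delta_derivative T (\<lambda>x. G x - F x) 0 t" if "t \<in> T" for t
    using delta_derivative_lin[OF G[OF that] F[OF that], of 1 "-1"] by simp
  then have "G s - F s = G 0 - F 0" by (rule delta_derivative_zero_const[OF cl T0 nn _ s])
  then show "I = F s - F 0" using I by simp
qed

(* The j-th Picard bound B (c x)^j / j!, the j-th term of the series of B exp (c x). *)
definition picard_bound :: "real \<Rightarrow> real \<Rightarrow> nat \<Rightarrow> real \<Rightarrow> real" where
  "picard_bound B c j x = B * (c * x) ^ j / fact j"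

lemma picard_bound_nonneg: "0 \<le> B \<Longrightarrow> 0 \<le> c \<Longrightarrow> 0 \<le> x \<Longrightarrow> 0 \<le> picard_bound B c j x"
  by (simp add: picard_bound_def)

lemma picard_bound_deriv:
  "(picard_bound B c (Suc j) has_real_derivative c * picard_bound B c j x) (at x)"
proof -
  have "((\<lambda>x. (c * x) ^ Suc j) has_real_derivative real (Suc j) * (c * (c * x) ^ j)) (at x)"
    using DERIV_power[OF DERIV_cmult_Id[of c x], of "Suc j"] by simp
  then have "((\<lambda>x. B / fact (Suc j) * (c * x) ^ Suc j) has_real_derivative
      B / fact (Suc j) * (real (Suc j) * (c * (c * x) ^ j))) (at x)"
    by (rule DERIV_cmult)
  moreover have "picard_bound B c (Suc j) = (\<lambda>x. B / fact (Suc j) * (c * x) ^ Suc j)"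
    by (simp add: fun_eq_iff picard_bound_def)
  moreover have "B / fact (Suc j) * (real (Suc j) * (c * (c * x) ^ j)) = c * picard_bound B c j x"
    by (simp add: picard_bound_def fact_Suc field_simps del: of_nat_Suc)
  ultimately show ?thesis by simp
qed

lemma power_increment_lower_bound:
  fixes x y :: real
  assumes "0 \<le> x" "x \<le> y"
  shows "real (Suc j) * (y - x) * x ^ j \<le> y ^ Suc j - x ^ Suc j"
proof -
  have "(\<Sum>i<Suc j. x ^ j) \<le> (\<Sum>i<Suc j. x ^ (Suc j - Suc i) * y ^ i)"
  proof (rule sum_mono)
    fix i assume i: "i \<in> {..<Suc j}"
    have "x ^ j = x ^ (Suc j - Suc i) * x ^ i" using i by (simp flip: power_add)
    also have "\<dots> \<le> x ^ (Suc j - Suc i) * y ^ i" using assms by (intro mult_left_mono power_mono) auto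
    finally show "x ^ j \<le> x ^ (Suc j - Suc i) * y ^ i" .
  qed
  then have "(y - x) * (real (Suc j) * x ^ j) \<le> (y - x) * (\<Sum>i<Suc j. x ^ (Suc j - Suc i) * y ^ i)"
    using assms by (intro mult_left_mono) auto
  also have "\<dots> = y ^ Suc j - x ^ Suc j" by (rule power_diff_sumr2[symmetric])
  finally show ?thesis by (simp add: algebra_simps)
qed

(* The discrete counterpart of picard_bound_deriv, needed across jumps. *)
lemma picard_bound_increment:
  assumes B: "0 \<le> B" and c: "0 \<le> c" and xy: "0 \<le> x" "x \<le> y"
  shows "c * (y - x) * picard_bound B c j x \<le> picard_bound B c (Suc j) y - picard_bound B c (Suc j) x"
proof -
  have "c * x \<le> c * y" by (rule mult_left_mono[OF xy(2) c])
  then have "real (Suc j) * (c * y - c * x) * (c * x) ^ j \<le> (c * y) ^ Suc j - (c * x) ^ Suc j"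
    using c xy by (intro power_increment_lower_bound) simp_all
  then have "B * (real (Suc j) * (c * y - c * x) * (c * x) ^ j) / fact (Suc j)
      \<le> B * ((c * y) ^ Suc j - (c * x) ^ Suc j) / fact (Suc j)"
    using B by (intro divide_right_mono mult_left_mono) auto
  moreover have "c * (y - x) * picard_bound B c j x
      = B * (real (Suc j) * (c * y - c * x) * (c * x) ^ j) / fact (Suc j)"
    by (simp add: picard_bound_def fact_Suc field_simps del: of_nat_Suc)
  ultimately show ?thesis by (simp add: picard_bound_def diff_divide_distrib right_diff_distrib)
qed

lemma picard_bound_tendsto_zero: "(\<lambda>j. picard_bound B c j x) \<longlonglongrightarrow> 0"
proof -
  have "(\<lambda>j. B * (inverse (fact j) * (c * x) ^ j)) \<longlonglongrightarrow> B * 0"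
    by (intro tendsto_mult_left summable_LIMSEQ_zero[OF summable_exp])
  then show ?thesis by (simp add: picard_bound_def field_simps)
qed

(* Across a jump, the equation w^Delta = - c (w - v) is the convex combination
   w (sigma t) = (1 - c mu) w t + c mu v t (here (TS1) is used), which preserves the
   bound |w| <= P_(j+1) + eps (1 + t) when |v| <= P_j. *)
lemma forced_equation_scattered_bound:
  fixes w v :: "real \<Rightarrow> real"
  assumes c: "c > 0" and B: "B \<ge> 0" and \<epsilon>: "\<epsilon> \<ge> 0"
    and t: "t \<in> T" "0 \<le> t" "t < ts_sigma T t" and TS: "1 - c * ts_mu T t > 0"
    and der: "has_delta_derivative T w (- c * (w t - v t)) t"
    and wt: "\<bar>w t\<bar> \<le> picard_bound B c (Suc j) t + \<epsilon> * (1 + t)"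
    and vt: "\<bar>v t\<bar> \<le> picard_bound B c j t"
  shows "\<bar>w (ts_sigma T t)\<bar> \<le> picard_bound B c (Suc j) (ts_sigma T t) + \<epsilon> * (1 + ts_sigma T t)"
proof -
  let ?P = "picard_bound B c"
  define y where "y = ts_sigma T t"
  define q where "q = c * (y - t)"
  define H where "H x = ?P (Suc j) x + \<epsilon> * (1 + x)" for x
  have q: "0 \<le> q" "0 < 1 - q" using c t TS by (auto simp: q_def y_def ts_mu_def)
  have H_nonneg: "H t \<ge> 0" using picard_bound_nonneg[of B c t "Suc j"] B c \<epsilon> t by (simp add: H_def)
  have "w y = (1 - q) * w t + q * v t"
    using delta_derivative_at_sigma[OF t(1) der] by (simp add: y_def q_def algebra_simps)
  then have "\<bar>w y\<bar> \<le> (1 - q) * \<bar>w t\<bar> + q * \<bar>v t\<bar>"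
    using q by (simp add: abs_mult abs_triangle_ineq[THEN order_trans])
  also have "\<dots> \<le> (1 - q) * H t + q * ?P j t"
    using wt vt q by (intro add_mono mult_left_mono) (auto simp: H_def)
  also have "\<dots> \<le> H t + q * ?P j t" using q H_nonneg by (simp add: algebra_simps)
  also have "\<dots> \<le> H y"
  proof -
    have "q * ?P j t \<le> ?P (Suc j) y - ?P (Suc j) t"
      unfolding q_def using B c t by (intro picard_bound_increment) (auto simp: y_def)
    moreover have "\<epsilon> * (1 + t) \<le> \<epsilon> * (1 + y)" using \<epsilon> t by (simp add: y_def mult_left_mono)
    ultimately show ?thesis by (simp add: H_def)
  qed
  finally show ?thesis by (simp add: y_def H_def)
qed

lemma forced_equation_bound_step:
  fixes w v :: "real \<Rightarrow> real"
  assumes cl: "closed T" and T0: "0 \<in> T" and nn: "\<forall>t\<in>T. 0 \<le> t" and c: "c > 0"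
    and TS: "\<forall>t\<in>T. 1 - c * ts_mu T t > 0" and B: "B \<ge> 0"
    and der: "\<And>t. t \<in> T \<Longrightarrow> has_delta_derivative T w (- c * (w t - v t)) t"
    and w0: "w 0 = 0"
    and v_bound: "\<forall>t\<in>T. t \<le> Tm \<longrightarrow> \<bar>v t\<bar> \<le> picard_bound B c j t"
  shows "\<forall>t\<in>T. t \<le> Tm \<longrightarrow> \<bar>w t\<bar> \<le> picard_bound B c (Suc j) t"
proof (intro ballI impI)
  fix s assume s: "s \<in> T" "s \<le> Tm"
  let ?P = "picard_bound B c"
  have approx: "\<bar>w s\<bar> \<le> ?P (Suc j) s + \<epsilon> * (1 + s)" if \<epsilon>: "\<epsilon> > 0" for \<epsilon>
  proof -
    define H where "H x = ?P (Suc j) x + \<epsilon> * (1 + x)" for x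
    have "\<forall>t\<in>T. t \<le> Tm \<longrightarrow> \<bar>w t\<bar> \<le> H t"
    proof (rule abs_comparison[OF cl T0 nn, where w = w and H = H
          and Dw = "\<lambda>t. - c * (w t - v t)" and DH = "\<lambda>t. c * ?P j t + \<epsilon>"])
      show "\<bar>w 0\<bar> \<le> H 0" using w0 \<epsilon> by (simp add: H_def picard_bound_def)
      show "(H has_real_derivative c * ?P j t + \<epsilon>) (at t)" for t
        unfolding H_def[abs_def] by (auto intro!: derivative_eq_intros picard_bound_deriv)
      show "has_delta_derivative T w (- c * (w t - v t)) t" if "t \<in> T" for t
        using der[OF that] .
      show "\<bar>w (ts_sigma T t)\<bar> \<le> H (ts_sigma T t)"
        if t: "t \<in> T" "t < ts_sigma T t" "ts_sigma T t \<le> Tm" "\<bar>w t\<bar> \<le> H t" for t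
      proof -
        have "0 \<le> \<epsilon>" "0 \<le> t" "1 - c * ts_mu T t > 0" using \<epsilon> nn TS t(1) by auto
        moreover have "\<bar>w t\<bar> \<le> ?P (Suc j) t + \<epsilon> * (1 + t)" using t(4) by (simp add: H_def)
        moreover have "\<bar>v t\<bar> \<le> ?P j t" using v_bound t(1-3) by simp
        ultimately show ?thesis unfolding H_def
          by (rule forced_equation_scattered_bound[where v = v, OF c B _ t(1) _ t(2) _ der[OF t(1)]])
      qed
    next
      fix t assume t: "t \<in> T" "ts_sigma T t = t" "t < Tm"
      have v: "\<bar>c * v t\<bar> \<le> c * ?P j t"
        using v_bound t c by (simp add: abs_mult mult_left_mono)
      have "c * H t \<ge> 0"
        using picard_bound_nonneg[of B c t "Suc j"] B c \<epsilon> nn t(1) by (simp add: H_def)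
      then show "w t = H t \<Longrightarrow> - c * (w t - v t) < c * ?P j t + \<epsilon>"
        and "w t = - H t \<Longrightarrow> - (- c * (w t - v t)) < c * ?P j t + \<epsilon>"
        using v \<epsilon> by (auto simp: algebra_simps abs_le_iff)
    qed
    then show ?thesis using s by (simp add: H_def)
  qed
  have "1 + s > 0" using nn s by force
  then show "\<bar>w s\<bar> \<le> ?P (Suc j) s" using approx by (rule le_by_scaled_epsilon)
qed

lemma chain_upstream_zero:
  fixes U :: "int \<Rightarrow> real \<Rightarrow> real"
  assumes cl: "closed T" and T0: "0 \<in> T" and nn: "\<forall>t\<in>T. 0 \<le> t" and c: "c > 0"
    and TS: "\<forall>t\<in>T. 1 - c * ts_mu T t > 0"
    and der: "\<And>n t. t \<in> T \<Longrightarrow> has_delta_derivative T (U n) (- c * (U n t - U (n - 1) t)) t"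
    and init: "\<And>n. n < 0 \<Longrightarrow> U n 0 = 0"
    and bdd: "\<And>Tm. Tm > 0 \<Longrightarrow> \<exists>B. \<forall>n. \<forall>t\<in>T. t \<le> Tm \<longrightarrow> \<bar>U n t\<bar> \<le> B"
    and n: "n < 0" and t: "t \<in> T"
  shows "U n t = 0"
proof -
  have t0: "0 \<le> t" using nn t by simp
  then obtain B where B: "\<forall>n. \<forall>s\<in>T. s \<le> t + 1 \<longrightarrow> \<bar>U n s\<bar> \<le> B" using bdd[of "t + 1"] by auto
  have "\<bar>U 0 0\<bar> \<le> B" using B T0 t0 by simp
  then have B0: "B \<ge> 0" by linarith
  have bound: "\<forall>m<0. \<forall>s\<in>T. s \<le> t + 1 \<longrightarrow> \<bar>U m s\<bar> \<le> picard_bound B c j s" for j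
  proof (induction j)
    case 0
    then show ?case using B by (simp add: picard_bound_def)
  next
    case (Suc j)
    show ?case
    proof (intro allI impI)
      fix m :: int assume m: "m < 0"
      show "\<forall>s\<in>T. s \<le> t + 1 \<longrightarrow> \<bar>U m s\<bar> \<le> picard_bound B c (Suc j) s"
      proof (rule forced_equation_bound_step[OF cl T0 nn c TS B0])
        show "has_delta_derivative T (U m) (- c * (U m s - U (m - 1) s)) s" if "s \<in> T" for s
          using der[OF that] .
        show "U m 0 = 0" using init[OF m] .
        show "\<forall>s\<in>T. s \<le> t + 1 \<longrightarrow> \<bar>U (m - 1) s\<bar> \<le> picard_bound B c j s"
          using Suc.IH m by simp
      qed
    qed
  qed
  have "\<bar>U n t\<bar> \<le> 0"
    by (rule LIMSEQ_le_const[OF picard_bound_tendsto_zero[of B c t]]) (use bound n t in auto)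
  then show ?thesis by simp
qed

(* Across a jump, w (sigma t) = (1 - c mu) w t preserves |w| <= A / (1 + c t) + eps. *)
lemma decay_scattered_bound:
  fixes w :: "real \<Rightarrow> real"
  assumes c: "c > 0" and A: "A \<ge> 0" and \<epsilon>: "\<epsilon> \<ge> 0"
    and t: "t \<in> T" "0 \<le> t" "t < ts_sigma T t" and TS: "1 - c * ts_mu T t > 0"
    and der: "has_delta_derivative T w (- c * w t) t"
    and wt: "\<bar>w t\<bar> \<le> A / (1 + c * t) + \<epsilon>"
  shows "\<bar>w (ts_sigma T t)\<bar> \<le> A / (1 + c * ts_sigma T t) + \<epsilon>"
proof -
  define y where "y = ts_sigma T t"
  define q where "q = c * (y - t)"
  have q: "0 \<le> q" "0 < 1 - q" using c t TS by (auto simp: q_def y_def ts_mu_def)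
  have pt: "1 + c * t > 0" using c t by (simp add: add_pos_nonneg)
  have cy: "c * y = c * t + q" by (simp add: q_def algebra_simps)
  have "w y = (1 - q) * w t"
    using delta_derivative_at_sigma[OF t(1) der] by (simp add: y_def q_def algebra_simps)
  then have "\<bar>w y\<bar> \<le> (1 - q) * (A / (1 + c * t) + \<epsilon>)" using wt q by (simp add: abs_mult mult_left_mono)
  also have "\<dots> \<le> A / (1 + c * y) + \<epsilon>"
  proof -
    have "(1 - q) * (1 + c * y) = 1 + c * t - q * (c * t + q)" by (simp add: cy algebra_simps)
    also have "\<dots> \<le> 1 + c * t" using q c t by simp
    finally have "(1 - q) / (1 + c * t) \<le> 1 / (1 + c * y)" using pt cy q by (simp add: field_simps)
    then have "A * ((1 - q) / (1 + c * t)) \<le> A * (1 / (1 + c * y))" using A by (rule mult_left_mono)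
    moreover have "(1 - q) * \<epsilon> \<le> \<epsilon>" using q \<epsilon> by (simp add: mult_left_le_one_le)
    ultimately show ?thesis by (simp add: algebra_simps)
  qed
  finally show ?thesis by (simp add: y_def)
qed

lemma decay_bound:
  fixes w :: "real \<Rightarrow> real"
  assumes cl: "closed T" and T0: "0 \<in> T" and nn: "\<forall>t\<in>T. 0 \<le> t" and c: "c > 0"
    and TS: "\<forall>t\<in>T. 1 - c * ts_mu T t > 0" and A: "A \<ge> 0"
    and der: "\<And>t. t \<in> T \<Longrightarrow> has_delta_derivative T w (- c * w t) t"
    and w0: "w 0 = A" and t: "t \<in> T"
  shows "\<bar>w t\<bar> \<le> A / (1 + c * t)"
proof (rule field_le_epsilon)
  fix \<epsilon> :: real assume \<epsilon>: "\<epsilon> > 0"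
  define H where "H x = A / (1 + c * x) + \<epsilon>" for x
  have pos: "1 + c * x > 0" if "x \<in> T" for x using that nn c by (simp add: add_pos_nonneg)
  have "\<forall>s\<in>T. s \<le> t \<longrightarrow> \<bar>w s\<bar> \<le> H s"
  proof (rule abs_comparison[OF cl T0 nn, where w = w and H = H
        and Dw = "\<lambda>x. - c * w x" and DH = "\<lambda>x. - (A * c) / (1 + c * x)\<^sup>2"])
    show "\<bar>w 0\<bar> \<le> H 0" using w0 A \<epsilon> by (simp add: H_def)
    show "has_delta_derivative T w (- c * w x) x" if "x \<in> T" for x using der[OF that] .
    show "(H has_real_derivative - (A * c) / (1 + c * x)\<^sup>2) (at x)" if "x \<in> T" for x
      using pos[OF that] unfolding H_def[abs_def]
      by (auto intro!: derivative_eq_intros simp: power2_eq_square)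
    show "\<bar>w (ts_sigma T x)\<bar> \<le> H (ts_sigma T x)"
      if x: "x \<in> T" "x < ts_sigma T x" "ts_sigma T x \<le> t" "\<bar>w x\<bar> \<le> H x" for x
    proof -
      have "0 \<le> \<epsilon>" "0 \<le> x" "1 - c * ts_mu T x > 0" using \<epsilon> nn TS x(1) by auto
      moreover have "\<bar>w x\<bar> \<le> A / (1 + c * x) + \<epsilon>" using x(4) by (simp add: H_def)
      ultimately show ?thesis unfolding H_def
        by (rule decay_scattered_bound[OF c A _ x(1) _ x(2) _ der[OF x(1)]])
    qed
  next
    fix x assume x: "x \<in> T" "ts_sigma T x = x" "x < t"
    have "1 + c * x \<le> (1 + c * x)\<^sup>2" using pos[OF x(1)] nn x(1) c
      by (simp add: power2_eq_square add_pos_nonneg)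
    then have "c * A / (1 + c * x)\<^sup>2 \<le> c * A / (1 + c * x)"
      using pos[OF x(1)] A c by (intro divide_left_mono) auto
    moreover have "c * H x = c * A / (1 + c * x) + c * \<epsilon>" by (simp add: H_def algebra_simps)
    moreover have "c * \<epsilon> > 0" using c \<epsilon> by simp
    ultimately show "w x = H x \<Longrightarrow> - c * w x < - (A * c) / (1 + c * x)\<^sup>2"
      and "w x = - H x \<Longrightarrow> - (- c * w x) < - (A * c) / (1 + c * x)\<^sup>2"
      by (simp_all add: mult.commute)
  qed
  then show "\<bar>w t\<bar> \<le> A / (1 + c * t) + \<epsilon>" using t by (simp add: H_def)
qed

lemma decaying_solution_limits:
  fixes w :: "real \<Rightarrow> real"
  assumes cl: "closed T" and T0: "0 \<in> T" and nn: "\<forall>t\<in>T. 0 \<le> t" and c: "c > 0"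
    and TS: "\<forall>t\<in>T. 1 - c * ts_mu T t > 0" and A: "A \<ge> 0"
    and der: "\<And>t. t \<in> T \<Longrightarrow> has_delta_derivative T w (- c * w t) t" and w0: "w 0 = A"
  shows "(w \<longlongrightarrow> 0) (inf at_top (principal T))"
    and "((\<lambda>s. delta_integral T w 0 s) \<longlongrightarrow> A / c) (inf at_top (principal T))"
proof -
  define F where "F = inf at_top (principal T)"
  have in_T: "eventually (\<lambda>t. t \<in> T) F" by (simp add: F_def eventually_inf_principal)
  show lim: "(w \<longlongrightarrow> 0) F"
  proof (rule Lim_null_comparison)
    show "eventually (\<lambda>t. norm (w t) \<le> A / (1 + c * t)) F"
      using in_T by (rule eventually_mono) (use decay_bound[OF cl T0 nn c TS A der w0] in simp)
    have "((\<lambda>t. A / (1 + c * t)) \<longlongrightarrow> 0) at_top" using c by real_asymp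
    then show "((\<lambda>t. A / (1 + c * t)) \<longlongrightarrow> 0) F"
      unfolding F_def by (rule tendsto_mono[rotated]) simp
  qed
  have "has_delta_derivative T (\<lambda>x. (-1 / c) * w x + 0 * w x) ((-1 / c) * (- c * w t) + 0 * (- c * w t)) t"
    if "t \<in> T" for t
    by (rule delta_derivative_lin[OF der[OF that] der[OF that]])
  then have anti: "has_delta_derivative T (\<lambda>x. - w x / c) (w t) t" if "t \<in> T" for t
    using that c by simp
  have integral: "delta_integral T w 0 s = (A - w s) / c" if "s \<in> T" for s
    using delta_integral_antiderivative[OF cl T0 nn anti that] w0 by (simp add: diff_divide_distrib)
  have "eventually (\<lambda>s. delta_integral T w 0 s = (A - w s) / c) F"
    using in_T by (rule eventually_mono) (rule integral)
  moreover have "((\<lambda>s. (A - w s) / c) \<longlongrightarrow> (A - 0) / c) F" by (intro tendsto_intros lim) (use c in simp)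
  ultimately show "((\<lambda>s. delta_integral T w 0 s) \<longlongrightarrow> A / c) F" by (simp add: tendsto_cong)
qed

theorem mainTheorem7:
  fixes T :: "real set" and A k mux :: real and u :: "real \<Rightarrow> real \<Rightarrow> real"
  assumes T_closed: "closed T"
    and T_zero: "0 \<in> T"
    and T_min: "\<forall>t\<in>T. 0 \<le> t"
    and T_unbounded: "\<forall>M. \<exists>t\<in>T. t > M"
    and A_pos: "A > 0" and k_pos: "k > 0" and mux_pos: "mux > 0"
    and TS1: "\<forall>t\<in>T. 1 - k * ts_mu T t / mux > 0"
    and eq: "\<forall>n::int. \<forall>t\<in>T. has_delta_derivative T (\<lambda>s. u (mux * of_int n) s)
               (- k * (u (mux * of_int n) t - u (mux * of_int n - mux) t) / mux) t"
    and init0: "u 0 0 = A"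
    and init: "\<forall>n::int. n \<noteq> 0 \<longrightarrow> u (mux * of_int n) 0 = 0"
    and bdd: "\<forall>T0>0. \<exists>B. \<forall>n::int. \<forall>t\<in>T. t \<le> T0 \<longrightarrow> \<bar>u (mux * of_int n) t\<bar> \<le> B"
  shows "((\<lambda>t. u 0 t) \<longlongrightarrow> 0) (inf at_top (principal T))
       \<and> ((\<lambda>s. delta_integral T (\<lambda>t. u 0 t) 0 s) \<longlongrightarrow> A * mux / k) (inf at_top (principal T))"
proof -
  define c where "c = k / mux"
  define U where "U = (\<lambda>(n::int) t. u (mux * of_int n) t)"
  have c: "c > 0" using k_pos mux_pos by (simp add: c_def)
  have TS: "\<forall>t\<in>T. 1 - c * ts_mu T t > 0" using TS1 by (simp add: c_def)
  have der: "has_delta_derivative T (U n) (- c * (U n t - U (n - 1) t)) t" if "t \<in> T" for n t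
    using eq that by (simp add: U_def c_def algebra_simps diff_divide_distrib)
  have der0: "has_delta_derivative T (u 0) (- c * u 0 t) t" if "t \<in> T" for t
  proof -
    have "U (-1) t = 0"
    proof (rule chain_upstream_zero[OF T_closed T_zero T_min c TS, where U = U])
      show "has_delta_derivative T (U n) (- c * (U n s - U (n - 1) s)) s" if "s \<in> T" for n s
        using der[OF that] .
    qed (use init bdd that in \<open>simp_all add: U_def\<close>)
    then show ?thesis using der[OF that, of 0] by (simp add: U_def)
  qed
  have "A / c = A * mux / k" by (simp add: c_def)
  then show ?thesis
    using decaying_solution_limits[OF T_closed T_zero T_min c TS _ der0 init0] A_pos by simp
qed

end
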